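(* Let $E: y^2=x^3+Ax+B$ be an elliptic curve over $\mathbb{Q}(2^\infty)$ with $j(E)\in\mathbb{Q}\setminus\{0,1728\}$, and let $E'$ be as in the context. If $E(\mathbb{Q}(2^\infty))[2]\neq\{\mathcal{O}\}$, then $E(\mathbb{Q}(2^\infty))[2]=E[2]$ and $E'(\mathbb{Q})[2]\neq\{\mathcal{O}\}$.
   Context: $\mathbb{Q}(2^\infty)=\mathbb{Q}(\{\sqrt{m}: m\in\mathbb{Z}\})$ is the compositum of all quadratic extensions of $\mathbb{Q}$ in $\mathbb{C}$. With $j=j(E)$, $E'$ is the elliptic curve over $\mathbb{Q}$ given by $y^2=x^3-\frac{27j}{j-1728}x+\frac{54j}{j-1728}$ (a quadratic twist of $E$ with the same $j$-invariant). *)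

theory Defs
  imports Complex_Main
begin

text \<open>Q(2^infinity): the subfield of the complex numbers generated by the square roots
  of all integers, i.e. the compositum of all quadratic extensions of Q in C.\<close>
inductive_set Q2inf :: "complex set" where
  rat: "q \<in> \<rat> \<Longrightarrow> q \<in> Q2inf"
| sqrt: "csqrt (of_int m) \<in> Q2inf"
| add: "a \<in> Q2inf \<Longrightarrow> b \<in> Q2inf \<Longrightarrow> a + b \<in> Q2inf"
| uminus: "a \<in> Q2inf \<Longrightarrow> - a \<in> Q2inf"
| mult: "a \<in> Q2inf \<Longrightarrow> b \<in> Q2inf \<Longrightarrow> a * b \<in> Q2inf"
| inverse: "a \<in> Q2inf \<Longrightarrow> inverse a \<in> Q2inf"

text \<open>Points of y^2 = x^3 + A x + B over C in projective form: None is the point at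
  infinity O, Some (x,y) an affine point.\<close>
type_synonym cpoint = "(complex \<times> complex) option"

definition on_curve :: "complex \<Rightarrow> complex \<Rightarrow> cpoint \<Rightarrow> bool" where
  "on_curve A B P = (case P of None \<Rightarrow> True | Some (x, y) \<Rightarrow> y^2 = x^3 + A * x + B)"

definition ell_add :: "complex \<Rightarrow> cpoint \<Rightarrow> cpoint \<Rightarrow> cpoint" where
  "ell_add A P Q = (case P of None \<Rightarrow> Q | Some (x1, y1) \<Rightarrow>
     (case Q of None \<Rightarrow> P | Some (x2, y2) \<Rightarrow>
       (if x1 = x2 \<and> y1 = - y2 then None
        else let l = (if x1 = x2 then (3 * x1^2 + A) / (2 * y1) else (y2 - y1) / (x2 - x1));
                 x3 = l^2 - x1 - x2
             in Some (x3, l * (x1 - x3) - y1))))"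

definition ell_points :: "complex set \<Rightarrow> complex \<Rightarrow> complex \<Rightarrow> cpoint set" where
  "ell_points K A B = {P. on_curve A B P \<and>
      (case P of None \<Rightarrow> True | Some (x, y) \<Rightarrow> x \<in> K \<and> y \<in> K)}"

text \<open>E(K)[2]; E[2] is E(C)[2], i.e. K = UNIV.\<close>
definition two_torsion :: "complex set \<Rightarrow> complex \<Rightarrow> complex \<Rightarrow> cpoint set" where
  "two_torsion K A B = {P \<in> ell_points K A B. ell_add A P P = None}"

definition j_inv :: "complex \<Rightarrow> complex \<Rightarrow> complex" where
  "j_inv A B = 1728 * (4 * A^3) / (4 * A^3 + 27 * B^2)"

end

theory Submission
  imports Defs
begin

text \<open>A point of order two on E over Q(2^infinity) is (x, 0) with x in Q(2^infinity) a root of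
  x^3 + A x + B. Since j is rational and differs from 0 and 1728, E is the twist of E' by
  d = -B/(2A), an element of Q(2^infinity), so x/d is a root in Q(2^infinity) of the rational cubic
  X^3 + A' X + B'. Each element of Q(2^infinity) lies in a tower of quadratic extensions
  Q(sqrt m1, ..., sqrt mk) of Q, and descending the tower shows that a rational cubic with a root
  there has a rational root r. This r gives a rational point of order two on E'; the other roots
  (-r \<plusminus> sqrt D)/2, with D rational, lie in Q(2^infinity) too, and scaling back by d puts all
  of E[2] over Q(2^infinity).\<close>

inductive_set multiquad :: "int list \<Rightarrow> complex set" for ms :: "int list" where
  rat: "q \<in> \<rat> \<Longrightarrow> q \<in> multiquad ms"
| sqrt: "m \<in> set ms \<Longrightarrow> csqrt (of_int m) \<in> multiquad ms"
| add: "a \<in> multiquad ms \<Longrightarrow> b \<in> multiquad ms \<Longrightarrow> a + b \<in> multiquad ms"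
| uminus: "a \<in> multiquad ms \<Longrightarrow> - a \<in> multiquad ms"
| mult: "a \<in> multiquad ms \<Longrightarrow> b \<in> multiquad ms \<Longrightarrow> a * b \<in> multiquad ms"
| inverse: "a \<in> multiquad ms \<Longrightarrow> inverse a \<in> multiquad ms"

lemma multiquad_diff: "a \<in> multiquad ms \<Longrightarrow> b \<in> multiquad ms \<Longrightarrow> a - b \<in> multiquad ms"
  by (metis diff_conv_add_uminus multiquad.add multiquad.uminus)

lemma multiquad_divide: "a \<in> multiquad ms \<Longrightarrow> b \<in> multiquad ms \<Longrightarrow> a / b \<in> multiquad ms"
  by (metis divide_inverse multiquad.mult multiquad.inverse)

lemma multiquad_power: "a \<in> multiquad ms \<Longrightarrow> a ^ n \<in> multiquad ms"
  by (induction n) (auto intro: multiquad.rat multiquad.mult)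

lemma multiquad_mono: "x \<in> multiquad ms \<Longrightarrow> set ms \<subseteq> set ms' \<Longrightarrow> x \<in> multiquad ms'"
  by (induction rule: multiquad.induct) (auto intro: multiquad.intros)

lemma multiquad_Nil: "x \<in> multiquad [] \<Longrightarrow> x \<in> \<rat>"
  by (induction rule: multiquad.induct) auto

lemma Q2inf_imp_multiquad: "x \<in> Q2inf \<Longrightarrow> \<exists>ms. x \<in> multiquad ms"
proof (induction rule: Q2inf.induct)
  case (sqrt m)
  then show ?case by (metis multiquad.sqrt list.set_intros(1))
next
  case (add a b)
  then obtain ms ms' where "a \<in> multiquad ms" "b \<in> multiquad ms'" by blast
  then have "a \<in> multiquad (ms @ ms')" "b \<in> multiquad (ms @ ms')" by (auto elim: multiquad_mono)
  then show ?case by (blast intro: multiquad.add)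
next
  case (mult a b)
  then obtain ms ms' where "a \<in> multiquad ms" "b \<in> multiquad ms'" by blast
  then have "a \<in> multiquad (ms @ ms')" "b \<in> multiquad (ms @ ms')" by (auto elim: multiquad_mono)
  then show ?case by (blast intro: multiquad.mult)
qed (blast intro: multiquad.intros)+

lemma inverse_add_mult_sqrt:
  fixes p q r m :: complex
  assumes "r * r = m" and "p * p - q * q * m \<noteq> 0"
  shows "inverse (p + q * r) = p / (p * p - q * q * m) + (- q / (p * p - q * q * m)) * r"
proof -
  have norm: "(p + q * r) * (p - q * r) = p * p - q * q * m"
    by (simp add: algebra_simps flip: assms(1))
  with assms(2) have "p + q * r \<noteq> 0" "p - q * r \<noteq> 0"
    by (metis mult_zero_left, metis mult_zero_right)
  then have "inverse (p + q * r) = (p - q * r) / ((p + q * r) * (p - q * r))"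
    by (simp add: inverse_eq_divide)
  then show ?thesis
    unfolding norm by (simp add: diff_divide_distrib)
qed

lemma sqrt_eq_ratio_if_norm_zero:
  fixes p q r m :: complex
  assumes "r * r = m" and "p * p - q * q * m = 0" and "q \<noteq> 0"
  shows "r = p / q \<or> r = - (p / q)"
proof -
  have "(p / q) * (p / q) = r * r"
    using assms by (simp add: field_simps)
  then show ?thesis by (metis square_eq_iff)
qed

lemma csqrt_mult_self: "csqrt z * csqrt z = z"
  by (metis power2_csqrt power2_eq_square)

definition adjoin_sqrt :: "int list \<Rightarrow> int \<Rightarrow> complex set" where
  "adjoin_sqrt ms m = {p + q * csqrt (of_int m) | p q. p \<in> multiquad ms \<and> q \<in> multiquad ms}"

lemma multiquad_subset_adjoin_sqrt: "x \<in> multiquad ms \<Longrightarrow> x \<in> adjoin_sqrt ms m"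
  unfolding adjoin_sqrt_def using multiquad.rat[OF Rats_0] by force

lemma csqrt_in_adjoin_sqrt: "csqrt (of_int m) \<in> adjoin_sqrt ms m"
  unfolding adjoin_sqrt_def using multiquad.rat[OF Rats_0] multiquad.rat[OF Rats_1] by force

lemma adjoin_sqrt_add:
  assumes "a \<in> adjoin_sqrt ms m" and "b \<in> adjoin_sqrt ms m"
  shows "a + b \<in> adjoin_sqrt ms m"
proof -
  obtain p q p' q' where "p \<in> multiquad ms" "q \<in> multiquad ms" "p' \<in> multiquad ms"
    "q' \<in> multiquad ms" "a = p + q * csqrt (of_int m)" "b = p' + q' * csqrt (of_int m)"
    using assms unfolding adjoin_sqrt_def by blast
  then show ?thesis
    unfolding adjoin_sqrt_def
    by (intro CollectI exI[of _ "p + p'"] exI[of _ "q + q'"])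
      (auto intro: multiquad.add simp: algebra_simps)
qed

lemma adjoin_sqrt_uminus:
  assumes "a \<in> adjoin_sqrt ms m"
  shows "- a \<in> adjoin_sqrt ms m"
proof -
  obtain p q where "p \<in> multiquad ms" "q \<in> multiquad ms" "a = p + q * csqrt (of_int m)"
    using assms unfolding adjoin_sqrt_def by blast
  then show ?thesis
    unfolding adjoin_sqrt_def
    by (intro CollectI exI[of _ "- p"] exI[of _ "- q"]) (auto intro: multiquad.uminus)
qed

lemma adjoin_sqrt_mult:
  assumes "a \<in> adjoin_sqrt ms m" and "b \<in> adjoin_sqrt ms m"
  shows "a * b \<in> adjoin_sqrt ms m"
proof -
  let ?r = "csqrt (of_int m)"
  obtain p q p' q' where pq: "p \<in> multiquad ms" "q \<in> multiquad ms" "p' \<in> multiquad ms"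
    "q' \<in> multiquad ms" "a = p + q * ?r" "b = p' + q' * ?r"
    using assms unfolding adjoin_sqrt_def by blast
  have "a * b = (p * p' + q * q' * (?r * ?r)) + (p * q' + q * p') * ?r"
    unfolding pq(5,6) by algebra
  then have "a * b = (p * p' + q * q' * of_int m) + (p * q' + q * p') * ?r"
    by (simp only: csqrt_mult_self)
  moreover have "p * p' + q * q' * of_int m \<in> multiquad ms" "p * q' + q * p' \<in> multiquad ms"
    using pq multiquad.rat[of "of_int m" ms] by (auto intro!: multiquad.add multiquad.mult)
  ultimately show ?thesis
    unfolding adjoin_sqrt_def by blast
qed

lemma adjoin_sqrt_inverse:
  assumes "a \<in> adjoin_sqrt ms m"
  shows "inverse a \<in> adjoin_sqrt ms m"
proof -
  let ?r = "csqrt (of_int m)" and ?N = "\<lambda>p q. p * p - q * q * of_int m"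
  obtain p q where pq: "p \<in> multiquad ms" "q \<in> multiquad ms" "a = p + q * ?r"
    using assms unfolding adjoin_sqrt_def by blast
  show ?thesis
  proof (cases "?N p q = 0")
    case True
    have "inverse a \<in> multiquad ms"
    proof (cases "q = 0")
      case False
      with True have "?r \<in> multiquad ms"
        using sqrt_eq_ratio_if_norm_zero[OF csqrt_mult_self] pq
        by (metis multiquad_divide multiquad.uminus)
      then show ?thesis
        using pq by (blast intro: multiquad.add multiquad.mult multiquad.inverse)
    qed (use pq in \<open>auto intro: multiquad.inverse\<close>)
    then show ?thesis
      by (rule multiquad_subset_adjoin_sqrt)
  next
    case False
    have "p / ?N p q \<in> multiquad ms" "- q / ?N p q \<in> multiquad ms"
      using pq multiquad.rat[of "of_int m" ms]
      by (auto intro!: multiquad.uminus multiquad.mult multiquad_divide multiquad_diff)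
    then show ?thesis
      unfolding pq(3) inverse_add_mult_sqrt[OF csqrt_mult_self False] adjoin_sqrt_def by blast
  qed
qed

lemma multiquad_Cons_subset: "x \<in> multiquad (m # ms) \<Longrightarrow> x \<in> adjoin_sqrt ms m"
proof (induction rule: multiquad.induct)
  case (sqrt m')
  then show ?case
    by (cases "m' = m")
      (auto intro: csqrt_in_adjoin_sqrt multiquad_subset_adjoin_sqrt multiquad.sqrt)
qed (auto intro: multiquad_subset_adjoin_sqrt multiquad.rat adjoin_sqrt_add adjoin_sqrt_uminus
      adjoin_sqrt_mult adjoin_sqrt_inverse)

lemma monic_cubic_third_root:
  fixes a b c x1 x2 :: complex
  assumes "x1^3 + a * x1^2 + b * x1 + c = 0" and "x2^3 + a * x2^2 + b * x2 + c = 0"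
    and "x1 \<noteq> x2"
  shows "(- a - x1 - x2)^3 + a * (- a - x1 - x2)^2 + b * (- a - x1 - x2) + c = 0"
proof -
  let ?h = "x1^2 + x1 * x2 + x2^2 + a * (x1 + x2) + b"
  have "(x1 - x2) * ?h = (x1^3 + a * x1^2 + b * x1 + c) - (x2^3 + a * x2^2 + b * x2 + c)"
    by algebra
  with assms have h: "?h = 0"
    by simp
  have "(- a - x1 - x2)^3 + a * (- a - x1 - x2)^2 + b * (- a - x1 - x2) + c
      = (- a - 2 * x1 - x2) * ?h + (x1^3 + a * x1^2 + b * x1 + c)"
    by algebra
  with h assms(1) show ?thesis
    by simp
qed

lemma monic_cubic_add_mult_sqrt:
  fixes p q s M a b c :: complex
  assumes "s * s = M"
  shows "(p + q * s)^3 + a * (p + q * s)^2 + b * (p + q * s) + c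
    = (p^3 + 3 * p * q^2 * M + a * (p^2 + q^2 * M) + b * p + c)
      + (3 * p^2 * q + q^3 * M + 2 * a * p * q + b * q) * s"
  unfolding assms[symmetric] by algebra

lemma multiquad_cubic_conjugate_root:
  fixes a b c p q :: complex and m :: int
  defines "r \<equiv> csqrt (of_int m)"
  assumes "p \<in> multiquad ms" "q \<in> multiquad ms" and "r \<notin> multiquad ms"
    and "a \<in> multiquad ms" "b \<in> multiquad ms" "c \<in> multiquad ms"
    and "(p + q * r)^3 + a * (p + q * r)^2 + b * (p + q * r) + c = 0"
  shows "(p - q * r)^3 + a * (p - q * r)^2 + b * (p - q * r) + c = 0"
proof -
  note r = csqrt_mult_self[of "of_int m", folded r_def]
  define U where "U = p^3 + 3 * p * q^2 * of_int m + a * (p^2 + q^2 * of_int m) + b * p + c"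
  define V where "V = 3 * p^2 * q + q^3 * of_int m + 2 * a * p * q + b * q"
  have "of_int m \<in> multiquad ms" "2 \<in> multiquad ms" "3 \<in> multiquad ms"
    by (auto intro: multiquad.rat)
  with assms have UV: "U \<in> multiquad ms" "V \<in> multiquad ms"
    unfolding U_def V_def by (blast intro: multiquad.add multiquad.mult multiquad_power)+
  have root: "U + V * r = 0"
    using assms(8) unfolding monic_cubic_add_mult_sqrt[OF r] U_def V_def .
  have "V = 0"
  proof (rule ccontr)
    assume "V \<noteq> 0"
    with root have "r = - U / V"
      by (simp add: field_simps add_eq_0_iff)
    with UV assms(4) show False
      by (metis multiquad.uminus multiquad_divide)
  qed
  moreover from root this have "U = 0"
    by simp
  moreover have "(p + (- q) * r)^3 + a * (p + (- q) * r)^2 + b * (p + (- q) * r) + c = U - V * r"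
    unfolding U_def V_def monic_cubic_add_mult_sqrt[OF r] by (simp add: algebra_simps)
  ultimately show ?thesis
    by simp
qed

text \<open>Descent along the tower: if the root p + q sqrt m does not lie in the smaller field, then
  by the conjugate root p - q sqrt m the third root -a - 2p does.\<close>

lemma multiquad_cubic_root_imp_rational_root:
  fixes a b c x :: complex
  assumes "x \<in> multiquad ms" and "a \<in> \<rat>" "b \<in> \<rat>" "c \<in> \<rat>"
    and "x^3 + a * x^2 + b * x + c = 0"
  shows "\<exists>r\<in>\<rat>. r^3 + a * r^2 + b * r + c = 0"
  using assms
proof (induction ms arbitrary: x)
  case Nil
  then show ?case
    using multiquad_Nil by blast
next
  case (Cons m ms)
  let ?r = "csqrt (of_int m)"
  obtain p q where pq: "p \<in> multiquad ms" "q \<in> multiquad ms" "x = p + q * ?r"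
    using multiquad_Cons_subset[OF Cons.prems(1)] unfolding adjoin_sqrt_def by blast
  have coeffs: "a \<in> multiquad ms" "b \<in> multiquad ms" "c \<in> multiquad ms" "2 \<in> multiquad ms"
    using Cons.prems by (auto intro: multiquad.rat)
  show ?case
  proof (cases "?r \<in> multiquad ms \<or> q = 0")
    case True
    then have "x \<in> multiquad ms"
      using pq by (auto intro: multiquad.add multiquad.mult)
    then show ?thesis
      using Cons by blast
  next
    case False
    then have conj_root: "(p - q * ?r)^3 + a * (p - q * ?r)^2 + b * (p - q * ?r) + c = 0"
      using multiquad_cubic_conjugate_root pq coeffs Cons.prems(5) by blast
    have "?r \<noteq> 0"
      using False multiquad.rat[OF Rats_0] by auto
    with False have "x \<noteq> p - q * ?r"
      using pq(3) by auto
    from monic_cubic_third_root[OF Cons.prems(5) conj_root this]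
    have "(- a - 2 * p)^3 + a * (- a - 2 * p)^2 + b * (- a - 2 * p) + c = 0"
      using pq(3) by (simp add: algebra_simps)
    moreover have "- a - 2 * p \<in> multiquad ms"
      using coeffs pq by (blast intro: multiquad_diff multiquad.mult multiquad.uminus)
    ultimately show ?thesis
      using Cons.IH Cons.prems(2-4) by blast
  qed
qed

lemma Q2inf_cubic_root_imp_rational_root:
  fixes a b c x :: complex
  assumes "x \<in> Q2inf" and "a \<in> \<rat>" "b \<in> \<rat>" "c \<in> \<rat>"
    and "x^3 + a * x^2 + b * x + c = 0"
  shows "\<exists>r\<in>\<rat>. r^3 + a * r^2 + b * r + c = 0"
  using Q2inf_imp_multiquad[OF assms(1)] multiquad_cubic_root_imp_rational_root assms(2-5)
  by blast

lemma Q2inf_diff: "a \<in> Q2inf \<Longrightarrow> b \<in> Q2inf \<Longrightarrow> a - b \<in> Q2inf"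
  by (metis diff_conv_add_uminus Q2inf.add Q2inf.uminus)

lemma Q2inf_divide: "a \<in> Q2inf \<Longrightarrow> b \<in> Q2inf \<Longrightarrow> a / b \<in> Q2inf"
  by (metis divide_inverse Q2inf.mult Q2inf.inverse)

lemma Q2inf_sqrt_Rats:
  assumes "q \<in> \<rat>"
  obtains s where "s \<in> Q2inf" and "s * s = q"
proof -
  obtain r where r: "q = of_rat r"
    using assms Rats_cases by blast
  obtain a b where ab: "quotient_of r = (a, b)"
    by (cases "quotient_of r")
  have "b > 0"
    using quotient_of_denom_pos[OF ab] .
  have q: "q = of_int a / of_int b"
    using r quotient_of_div[OF ab] by (simp add: of_rat_divide)
  let ?s = "csqrt (of_int (a * b)) / of_int b"
  have "?s \<in> Q2inf"
    by (intro Q2inf_divide Q2inf.sqrt Q2inf.rat) simp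
  moreover have "?s * ?s = q"
    using \<open>b > 0\<close> csqrt_mult_self[of "of_int (a * b)"] unfolding q by (simp add: field_simps)
  ultimately show ?thesis
    using that by blast
qed

lemma monic_cubic_rational_root_imp_roots_in_Q2inf:
  fixes a b c r x :: complex
  assumes "a \<in> \<rat>" "b \<in> \<rat>" "c \<in> \<rat>" and "r \<in> \<rat>"
    and "r^3 + a * r^2 + b * r + c = 0" and "x^3 + a * x^2 + b * x + c = 0"
  shows "x \<in> Q2inf"
proof -
  let ?e = "r + a" and ?f = "r^2 + a * r + b"
  have "(x - r) * (x^2 + ?e * x + ?f)
      = (x^3 + a * x^2 + b * x + c) - (r^3 + a * r^2 + b * r + c)"
    by algebra
  with assms(5,6) have "x = r \<or> x^2 + ?e * x + ?f = 0"
    by simp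
  moreover obtain s where s: "s \<in> Q2inf" "s * s = ?e^2 - 4 * ?f"
    using Q2inf_sqrt_Rats[of "?e^2 - 4 * ?f"] assms(1-4) by auto
  then have "x^2 + ?e * x + ?f = (x - (- ?e + s) / 2) * (x - (- ?e - s) / 2)"
    by (simp add: field_simps power2_eq_square)
  ultimately have "x = r \<or> x = (- ?e + s) / 2 \<or> x = (- ?e - s) / 2"
    by auto
  moreover have "r \<in> Q2inf" "?e \<in> Q2inf" "2 \<in> Q2inf"
    using assms(1,4) by (auto intro: Q2inf.rat)
  ultimately show ?thesis
    using s(1) by (metis Q2inf_divide Q2inf_diff Q2inf.add Q2inf.uminus)
qed

lemma twist_by_j_inv:
  fixes A B x :: complex
  assumes "j_inv A B \<noteq> 0" and "j_inv A B \<noteq> 1728"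
  defines "j \<equiv> j_inv A B" and "d \<equiv> - B / (2 * A)"
  shows "d \<noteq> 0"
    and "x^3 + A * x + B
      = d^3 * ((x / d)^3 + (- 27 * j / (j - 1728)) * (x / d) + 54 * j / (j - 1728))"
proof -
  \<comment> \<open>j_inv A B is 0 (division by zero) when the discriminant vanishes\<close>
  have disc: "4 * A^3 + 27 * B^2 \<noteq> 0" and "A \<noteq> 0"
    using assms(1) unfolding j_inv_def by auto
  moreover have "B \<noteq> 0"
    using assms(2) \<open>A \<noteq> 0\<close> unfolding j_inv_def by auto
  ultimately show "d \<noteq> 0"
    unfolding d_def by simp
  have j: "j = 1728 * (4 * A^3) / (4 * A^3 + 27 * B^2)"
    unfolding j_def j_inv_def ..
  have j_1728: "j - 1728 = - 1728 * 27 * B^2 / (4 * A^3 + 27 * B^2)"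
    unfolding j using disc by (simp add: field_simps)
  have "j - 1728 \<noteq> 0"
    using assms(2) unfolding j_def by simp
  moreover have "- 27 * j = (4 * A^3 / B^2) * (j - 1728)" "54 * j = (- 8 * A^3 / B^2) * (j - 1728)"
    unfolding j_1728 unfolding j using disc \<open>B \<noteq> 0\<close> by (simp_all add: field_simps)
  ultimately have coeffs: "- 27 * j / (j - 1728) = 4 * A^3 / B^2"
    "54 * j / (j - 1728) = - 8 * A^3 / B^2"
    by simp_all
  show "x^3 + A * x + B
      = d^3 * ((x / d)^3 + (- 27 * j / (j - 1728)) * (x / d) + 54 * j / (j - 1728))"
    using \<open>A \<noteq> 0\<close> \<open>B \<noteq> 0\<close> unfolding coeffs d_def
    by (simp add: field_simps power2_eq_square power3_eq_cube)
qed

lemma two_torsion_eq_roots: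
  assumes "0 \<in> K"
  shows "two_torsion K A B = insert None ((\<lambda>x. Some (x, 0)) ` {x \<in> K. x^3 + A * x + B = 0})"
    (is "_ = ?roots")
proof (rule set_eqI)
  fix P :: cpoint
  show "P \<in> two_torsion K A B \<longleftrightarrow> P \<in> ?roots"
    using assms
    by (cases P)
      (auto simp: two_torsion_def ell_points_def on_curve_def ell_add_def Let_def split: if_splits)
qed

theorem lemma5p6:
  fixes A B :: complex
  assumes "A \<in> Q2inf" and "B \<in> Q2inf"
    and "4 * A^3 + 27 * B^2 \<noteq> 0"
    and "j_inv A B \<in> \<rat>" and "j_inv A B \<noteq> 0" and "j_inv A B \<noteq> 1728"
    and "two_torsion Q2inf A B \<noteq> {None}"
  shows "two_torsion Q2inf A B = two_torsion UNIV A B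
    \<and> two_torsion \<rat> (- 27 * j_inv A B / (j_inv A B - 1728))
                      (54 * j_inv A B / (j_inv A B - 1728)) \<noteq> {None}"
proof -
  define d where "d = - B / (2 * A)"
  let ?A' = "- 27 * j_inv A B / (j_inv A B - 1728)" and ?B' = "54 * j_inv A B / (j_inv A B - 1728)"
  have "d \<noteq> 0" and "\<And>x. x^3 + A * x + B = d^3 * ((x / d)^3 + ?A' * (x / d) + ?B')"
    using twist_by_j_inv[OF assms(5,6)] unfolding d_def by blast+
  then have root_iff: "x^3 + A * x + B = 0 \<longleftrightarrow> (x / d)^3 + 0 * (x / d)^2 + ?A' * (x / d) + ?B' = 0"
    for x by simp
  have "d \<in> Q2inf"
    unfolding d_def using assms(1,2) Q2inf.rat[of 2]
    by (simp add: Q2inf_divide Q2inf.mult Q2inf.uminus)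
  have rational: "0 \<in> \<rat>" "?A' \<in> \<rat>" "?B' \<in> \<rat>"
    using assms(4) by auto
  obtain x0 where "x0 \<in> Q2inf" "x0^3 + A * x0 + B = 0"
    using assms(7) two_torsion_eq_roots[OF Q2inf.rat[OF Rats_0]] by auto
  with \<open>d \<in> Q2inf\<close> obtain r where r: "r \<in> \<rat>" "r^3 + 0 * r^2 + ?A' * r + ?B' = 0"
    using Q2inf_cubic_root_imp_rational_root[OF _ rational] root_iff Q2inf_divide by meson
  have "x \<in> Q2inf" if "x^3 + A * x + B = 0" for x
  proof -
    have "x / d \<in> Q2inf"
      using monic_cubic_rational_root_imp_roots_in_Q2inf[OF rational r] that root_iff by blast
    with \<open>d \<in> Q2inf\<close> \<open>d \<noteq> 0\<close> show ?thesis
      by (metis Q2inf.mult nonzero_mult_div_cancel_left times_divide_eq_right)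
  qed
  then have "{x \<in> Q2inf. x^3 + A * x + B = 0} = {x \<in> UNIV. x^3 + A * x + B = 0}"
    by blast
  then have "two_torsion Q2inf A B = two_torsion UNIV A B"
    by (simp only: two_torsion_eq_roots[OF Q2inf.rat[OF Rats_0]] two_torsion_eq_roots[OF UNIV_I])
  moreover have "two_torsion \<rat> ?A' ?B' \<noteq> {None}"
    using r by (auto simp: two_torsion_eq_roots)
  ultimately show ?thesis
    by blast
qed

end
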